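(* Let $A_i\in\mathbb{R}^{n\times n}$, $i\ge -1$, be entrywise nonnegative matrices such that $A=\sum_{i=-1}^{\infty}A_i$ is irreducible and row stochastic. Assume that $\sum_{i=-1}^\infty iA_i$ converges and $\eta=\mathbf v^T\mathbf w<0$, where $\mathbf v>0$ satisfies $\mathbf v^TA=\mathbf v^T$, $\mathbf v^T\mathbf e=1$, and $\mathbf w=\sum_{i=-1}^\infty iA_i\mathbf e$. Let $G$ be the componentwise minimal nonnegative solution of $X=\sum_{i=-1}^{\infty}A_iX^{i+1}$. Let $W=\sum_{i=1}^\infty A_i\sum_{j=0}^i G^j$ and, for real $\omega$, \[ P(\omega)=(I_n-A_0)^{-1}W-\omega(I_n-A_0)^{-1}A_1(I_n+G)\bigl(I_n-(I_n-A_0)^{-1}W\bigr), \] with $\rho_\omega=\rho(P(\omega))$ its spectral radius. Let $\hat\omega\ge1$ satisfy $\hat\omega A_1(I_n+G)(I_n-A_0)^{-1}(I_n-A_0-W)\le W$, and let $0\le\omega\le\hat\omega$. Assume that the Perron eigenvector $\mathbf z$ of $P(0)$ (i.e. $P(0)\mathbf z=\rho_0\mathbf z$) is entrywise positive. Let $\mathbf u=(I_n-A_0)^{-1}A_1(I_n+G)\mathbf z$, $\sigma_{\min}=\min_i u_i/z_i$, $\sigma_{\max}=\max_i u_i/z_i$. Then \[ \rho_0-\omega(1-\rho_0)\sigma_{\max}\le\rho_\omega\le\rho_0-\omega(1-\rho_0)\sigma_{\min}, \] and $0\le\sigma_{\min},\sigma_{\max}\le\rho_0$.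
   Context: $\mathbf e$ is the all-ones vector; inequalities between matrices/vectors are entrywise. $P(0)=(I_n-A_0)^{-1}W$ is entrywise nonnegative. *)

theory Defs
  imports "HOL-Analysis.Analysis"
begin

primrec matpow :: "'a::comm_ring_1^'n^'n \<Rightarrow> nat \<Rightarrow> 'a^'n^'n" where
  "matpow M 0 = mat 1"
| "matpow M (Suc k) = M ** matpow M k"

definition mat_nonneg :: "real^'n^'m \<Rightarrow> bool" where
  "mat_nonneg M \<longleftrightarrow> (\<forall>i j. M $ i $ j \<ge> 0)"

definition mat_le :: "real^'n^'m \<Rightarrow> real^'n^'m \<Rightarrow> bool" where
  "mat_le M N \<longleftrightarrow> (\<forall>i j. M $ i $ j \<le> N $ i $ j)"

definition ones :: "real^'n" where
  "ones = (\<chi> i. 1)"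

definition irreducible_mat :: "real^'n^'n \<Rightarrow> bool" where
  "irreducible_mat M \<longleftrightarrow> (\<forall>i j. \<exists>k>0. matpow M k $ i $ j > 0)"

definition row_stochastic :: "real^'n^'n \<Rightarrow> bool" where
  "row_stochastic M \<longleftrightarrow> mat_nonneg M \<and> M *v ones = ones"

definition spectral_radius :: "real^'n^'n \<Rightarrow> real" where
  "spectral_radius M = Max {cmod l | l. \<exists>x::complex^'n. x \<noteq> 0 \<and>
      (\<chi> i j. complex_of_real (M $ i $ j)) *v x = l *s x}"

end

theory Submission
  imports Defs "HOL-Computational_Algebra.Polynomial"
begin

(*
  Both bounds are Collatz-Wielandt bounds for the nonnegative matrix P(omega) at the positive
  vector z. With R = (I - A_0)^-1 one has (I - R W) z = (1 - rho_0) z, hence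
  P(omega) z = rho_0 z - omega (1 - rho_0) u, while sigma_min z <= u <= sigma_max z by definition.
  The condition on omega_hat makes P(omega) nonnegative; R exists and is nonnegative because A is
  irreducible stochastic and A_0 <= A, A_0 <> A (otherwise eta = 0); and 0 <= u <= rho_0 z
  because W >= A_1 (I + G).

  What remains is rho_0 <= 1, needed for omega (1 - rho_0) >= 0. The identity
  (I - A_0 - W)(I - G) = I - A makes r = v^T (I - A_0 - W) a left fixed vector of G. Minimality
  of G gives G e <= e, so the Cesaro averages of G^k z are bounded and have a limit point zeta
  with G zeta = zeta and r zeta = r z. Then A zeta = zeta, so zeta = c e with c >= 0 by
  irreducibility, and r zeta = -c eta >= 0. Since r = q (I - R W) for the nonzero vector
  q = v^T (I - A_0) >= 0, this gives (1 - rho_0) q z = r z >= 0 with q z > 0.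
*)

lemma ones_nth [simp]: "ones $ i = 1"
  by (simp add: ones_def)

lemma matrix_add_rdistrib: "((A::'a::semiring_1^'n^'m) + B) ** C = A ** C + B ** C"
  by (simp add: matrix_matrix_mult_def vec_eq_iff distrib_right sum.distrib)

lemma matrix_diff_rdistrib: "((A::'a::ring_1^'n^'m) - B) ** C = A ** C - B ** C"
  by (simp add: matrix_matrix_mult_def vec_eq_iff left_diff_distrib sum_subtractf)

lemma matrix_diff_ldistrib: "(A::'a::ring_1^'n^'m) ** (B - C) = A ** B - A ** C"
  by (simp add: matrix_matrix_mult_def vec_eq_iff right_diff_distrib sum_subtractf)

lemma matrix_vector_mult_uminus_right: "A *v (- x) = - (A *v (x::'a::ring_1^'n))"
  by (simp add: matrix_vector_mult_def vec_eq_iff sum_negf)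

lemma matrix_vector_mult_uminus_left: "(- A) *v x = - (A *v (x::'a::ring_1^'n))"
  by (simp add: matrix_vector_mult_def vec_eq_iff sum_negf)

lemma matrix_vector_mult_axis: "(A *v axis j 1) $ i = (A $ i $ j :: 'a::semiring_1)"
  by (simp add: matrix_vector_mult_def axis_def if_distrib cong: if_cong)

lemma matrix_vector_mult_scaleR_left: "((c::real) *\<^sub>R (M::real^'n^'m)) *v x = c *\<^sub>R (M *v x)"
  by (simp add: vec_eq_iff matrix_vector_mult_def sum_distrib_left mult.assoc)

lemma matrix_vector_mult_sum_left: "sum f S *v (x::'a::semiring_1^'n) = (\<Sum>j\<in>S. f j *v x)"
  by (induction S rule: infinite_finite_induct) (simp_all add: matrix_vector_mult_add_rdistrib)

lemma bounded_linear_matrix_mult_right: "bounded_linear (\<lambda>X::real^'n^'m. X ** C)"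
  unfolding linear_conv_bounded_linear[symmetric]
  by (rule linearI) (simp_all add: matrix_add_rdistrib scalar_matrix_assoc)

lemma bounded_linear_matrix_vector_mult_left: "bounded_linear (\<lambda>X::real^'n^'m. X *v x)"
  unfolding linear_conv_bounded_linear[symmetric]
  by (rule linearI) (simp_all add: matrix_vector_mult_add_rdistrib matrix_vector_mult_scaleR_left)

lemma summable_matrix_nth:
  fixes f :: "nat \<Rightarrow> real^'n^'m"
  assumes "summable f"
  shows "summable (\<lambda>k. f k $ i $ j)"
  using summable_vec_nth[OF summable_vec_nth[OF assms]] .

lemma suminf_matrix_nth:
  fixes f :: "nat \<Rightarrow> real^'n^'m"
  assumes "summable f"
  shows "suminf f $ i $ j = (\<Sum>k. f k $ i $ j)"
  using sums_vec_nth[OF sums_vec_nth[OF summable_sums[OF assms]]] by (simp add: sums_iff)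

lemma summable_matrixI:
  fixes f :: "nat \<Rightarrow> real^'n^'m"
  assumes "\<And>i j. summable (\<lambda>k. f k $ i $ j)"
  shows "summable f"
proof -
  have "(\<lambda>n. \<Sum>k<n. f k) \<longlonglongrightarrow> (\<chi> i j. \<Sum>k. f k $ i $ j)"
    using assms by (intro vec_tendstoI) (simp add: sum_component summable_LIMSEQ)
  then show ?thesis by (auto simp: summable_def sums_def)
qed

lemma matrix_inv_invertible:
  assumes "invertible M"
  shows "M ** matrix_inv M = mat 1" and "matrix_inv M ** M = mat 1"
  using someI_ex[OF assms[unfolded invertible_def]] unfolding matrix_inv_def by auto

lemma finite_type_argmax:
  fixes f :: "'n::finite \<Rightarrow> real"
  obtains i where "\<And>j. f j \<le> f i"
  using Max_in[of "range f"] Max_ge[of "range f"] by fastforce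

lemma finite_type_argmin:
  fixes f :: "'n::finite \<Rightarrow> real"
  obtains i where "\<And>j. f i \<le> f j"
  using Min_in[of "range f"] Min_le[of "range f"] by fastforce

lemma mat_nonneg_mult: "mat_nonneg A \<Longrightarrow> mat_nonneg B \<Longrightarrow> mat_nonneg (A ** B)"
  unfolding mat_nonneg_def by (auto simp: matrix_matrix_mult_def intro!: sum_nonneg)

lemma mat_nonneg_add: "mat_nonneg A \<Longrightarrow> mat_nonneg B \<Longrightarrow> mat_nonneg (A + B)"
  unfolding mat_nonneg_def by (auto intro: add_nonneg_nonneg)

lemma mat_nonneg_one: "mat_nonneg (mat 1)"
  unfolding mat_nonneg_def by (simp add: mat_def)

lemma mat_nonneg_matpow: "mat_nonneg M \<Longrightarrow> mat_nonneg (matpow M k)"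
  by (induction k) (auto simp: mat_nonneg_one mat_nonneg_mult)

lemma mat_nonneg_sum: "(\<And>j. j \<in> S \<Longrightarrow> mat_nonneg (f j)) \<Longrightarrow> mat_nonneg (sum f S)"
  unfolding mat_nonneg_def by (auto simp: sum_component intro!: sum_nonneg)

lemma mat_le_refl: "mat_le A A"
  by (simp add: mat_le_def)

lemma mat_le_mult:
  assumes "mat_nonneg A" "mat_nonneg B" "mat_le A A'" "mat_le B B'"
  shows "mat_le (A ** B) (A' ** B')"
  using assms unfolding mat_le_def mat_nonneg_def
  by (auto simp: matrix_matrix_mult_def intro!: sum_mono mult_mono) (meson order_trans)

lemma mat_le_matpow:
  assumes "mat_nonneg A" "mat_le A B"
  shows "mat_le (matpow A k) (matpow B k)"
  by (induction k) (simp_all add: mat_le_refl mat_le_mult mat_nonneg_matpow assms)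

lemma matrix_vector_mult_nonneg:
  assumes "mat_nonneg M" "\<And>j. 0 \<le> x $ j"
  shows "0 \<le> (M *v x) $ i"
  using assms unfolding mat_nonneg_def matrix_vector_mult_def by (auto intro!: sum_nonneg)

lemma matrix_vector_mult_mono:
  assumes "mat_nonneg M" "\<And>j. x $ j \<le> y $ j"
  shows "(M *v x) $ i \<le> (M *v y) $ i"
  using matrix_vector_mult_nonneg[OF assms(1), of "y - x" i] assms(2)
  by (simp add: matrix_vector_mult_diff_distrib)

lemma matpow_commute: "matpow M k ** M = M ** matpow M k"
  by (induction k) (simp_all add: matrix_mul_assoc[symmetric])

lemma matpow_fixed_vector: "M *v x = x \<Longrightarrow> matpow M k *v x = x"
  by (induction k) (simp_all flip: matrix_vector_mul_assoc)

lemma matpow_geometric_sum: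
  "(\<Sum>j\<le>n. matpow G j) ** (mat 1 - G) = mat 1 - matpow G (Suc n)"
proof (induction n)
  case (Suc n)
  have "(\<Sum>j\<le>Suc n. matpow G j) ** (mat 1 - G)
      = (\<Sum>j\<le>n. matpow G j) ** (mat 1 - G) + matpow G (Suc n) ** (mat 1 - G)"
    by (simp add: matrix_add_rdistrib)
  also have "\<dots> = mat 1 - matpow G (Suc (Suc n))"
    using Suc by (simp add: matrix_diff_ldistrib matrix_mul_assoc[symmetric] matpow_commute)
  finally show ?case .
qed simp

section \<open>Collatz-Wielandt bounds for the spectral radius\<close>

lemma det_eq_0_iff_kernel:
  fixes A :: "'a::field^'n^'n"
  shows "det A = 0 \<longleftrightarrow> (\<exists>x. x \<noteq> 0 \<and> A *v x = 0)"
  by (metis invertible_det_nz invertible_left_inverse matrix_left_invertible_ker)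

lemma mat_vector_mult: "mat c *v (x::'a::comm_semiring_1^'n) = c *s x"
  by (simp add: matrix_vector_mult_def mat_def vec_eq_iff if_distrib if_distribR cong: if_cong)

lemma shifted_kernel_iff: "(mat c - M) *v x = 0 \<longleftrightarrow> M *v x = c *s (x::'a::comm_ring_1^'n)"
  by (auto simp add: matrix_vector_mult_diff_rdistrib mat_vector_mult)

lemma eigenvalue_norm_le_entry_sum:
  fixes M :: "complex^'n^'n"
  assumes "x \<noteq> 0" "M *v x = l *s x"
  shows "cmod l \<le> (\<Sum>i\<in>UNIV. \<Sum>j\<in>UNIV. cmod (M $ i $ j))"
proof -
  obtain i where imax: "\<And>j. cmod (x $ j) \<le> cmod (x $ i)"
    using finite_type_argmax[of "\<lambda>j. cmod (x $ j)"] by blast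
  obtain k where "x $ k \<noteq> 0"
    using assms(1) by (metis vec_eq_iff zero_index)
  then have xi: "cmod (x $ i) > 0"
    using imax[of k] by (meson norm_le_zero_iff not_le order.strict_trans1 zero_less_norm_iff)
  have "l * x $ i = (\<Sum>j\<in>UNIV. M $ i $ j * x $ j)"
    using arg_cong[OF assms(2), of "\<lambda>y. y $ i"] by (simp add: matrix_vector_mult_def)
  then have "cmod l * cmod (x $ i) = cmod (\<Sum>j\<in>UNIV. M $ i $ j * x $ j)"
    by (metis norm_mult)
  also have "\<dots> \<le> (\<Sum>j\<in>UNIV. cmod (M $ i $ j) * cmod (x $ j))"
    using norm_sum by (metis (no_types, lifting) norm_mult sum.cong)
  also have "\<dots> \<le> (\<Sum>j\<in>UNIV. cmod (M $ i $ j)) * cmod (x $ i)"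
    unfolding sum_distrib_right by (intro sum_mono mult_left_mono imax) auto
  also have "\<dots> \<le> (\<Sum>i\<in>UNIV. \<Sum>j\<in>UNIV. cmod (M $ i $ j)) * cmod (x $ i)"
    by (intro mult_right_mono member_le_sum) (auto intro: sum_nonneg)
  finally show ?thesis using xi by simp
qed

lemma det_shift_poly:
  fixes M :: "complex^'n^'n"
  obtains p where "p \<noteq> 0" "\<And>l. det (mat l - M) = poly p l"
proof -
  define p where "p = (\<Sum>q | q permutes (UNIV::'n set). [:of_int (sign q):] *
      (\<Prod>i\<in>UNIV. [: - M $ i $ q i, if i = q i then 1 else 0 :]))"
  have eval: "det (mat l - M) = poly p l" for l
    unfolding p_def det_def poly_sum poly_prod
    by (intro sum.cong refl) (auto simp: mat_def poly_prod intro!: prod.cong)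
  define K where "K = (\<Sum>i\<in>UNIV. \<Sum>j\<in>UNIV. cmod (M $ i $ j))"
  have "K \<ge> 0" unfolding K_def by (intro sum_nonneg) auto
  then have big: "cmod (complex_of_real (K + 1)) > K" by simp
  have "det (mat (complex_of_real (K + 1)) - M) \<noteq> 0"
  proof
    assume "det (mat (complex_of_real (K + 1)) - M) = 0"
    then obtain x where "x \<noteq> 0" "M *v x = complex_of_real (K + 1) *s x"
      unfolding det_eq_0_iff_kernel shifted_kernel_iff by blast
    then show False using eigenvalue_norm_le_entry_sum big unfolding K_def by fastforce
  qed
  with eval show ?thesis by (intro that[of p]) auto
qed

lemma finite_eigenvalues:
  fixes M :: "complex^'n^'n"
  shows "finite {l. \<exists>x. x \<noteq> 0 \<and> M *v x = l *s x}"
proof -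
  obtain p where p: "p \<noteq> 0" "\<And>l. det (mat l - M) = poly p l"
    using det_shift_poly by blast
  have "{l. \<exists>x. x \<noteq> 0 \<and> M *v x = l *s x} \<subseteq> {l. poly p l = 0}"
  proof safe
    fix l x
    assume "x \<noteq> 0" "M *v x = l *s x"
    then have "det (mat l - M) = 0"
      unfolding det_eq_0_iff_kernel shifted_kernel_iff by blast
    then show "poly p l = 0" by (simp add: p(2))
  qed
  then show ?thesis using poly_roots_finite[OF p(1)] finite_subset by blast
qed

lemma eigenvalue_norm_le_of_subinvariant:
  fixes P :: "real^'n^'n"
  assumes P: "mat_nonneg P" and z: "\<And>i. z $ i > 0"
    and d: "\<And>i. (P *v z) $ i \<le> d * z $ i"
    and x: "x \<noteq> 0" and eig: "map_matrix complex_of_real P *v x = l *s x"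
  shows "cmod l \<le> d"
proof -
  obtain i where imax: "\<And>j. cmod (x $ j) / z $ j \<le> cmod (x $ i) / z $ i"
    using finite_type_argmax[of "\<lambda>j. cmod (x $ j) / z $ j"] by blast
  define m where "m = cmod (x $ i) / z $ i"
  obtain k where "x $ k \<noteq> 0" using x by (metis vec_eq_iff zero_index)
  then have "0 < cmod (x $ k) / z $ k" using z[of k] by simp
  then have m: "m > 0" using imax[of k] unfolding m_def by linarith
  have xj: "cmod (x $ j) \<le> m * z $ j" for j
    using imax[of j] z[of j] unfolding m_def by (simp add: divide_le_eq)
  have "l * x $ i = (\<Sum>j\<in>UNIV. complex_of_real (P $ i $ j) * x $ j)"
    using arg_cong[OF eig, of "\<lambda>y. y $ i"] by (simp add: matrix_vector_mult_def)
  moreover have "m * z $ i = cmod (x $ i)"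
    unfolding m_def using z[of i] by simp
  ultimately have "cmod l * (m * z $ i) = cmod (\<Sum>j\<in>UNIV. complex_of_real (P $ i $ j) * x $ j)"
    by (metis norm_mult)
  also have "\<dots> \<le> (\<Sum>j\<in>UNIV. cmod (complex_of_real (P $ i $ j) * x $ j))"
    by (rule norm_sum)
  also have "\<dots> = (\<Sum>j\<in>UNIV. P $ i $ j * cmod (x $ j))"
    using P unfolding mat_nonneg_def by (simp add: norm_mult)
  also have "\<dots> \<le> (\<Sum>j\<in>UNIV. P $ i $ j * (m * z $ j))"
    using P unfolding mat_nonneg_def by (intro sum_mono mult_left_mono xj) auto
  also have "\<dots> = m * (P *v z) $ i"
    by (simp add: matrix_vector_mult_def sum_distrib_left mult_ac)
  also have "\<dots> \<le> d * (m * z $ i)"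
    using d[of i] m by simp
  finally show ?thesis using m z[of i] by simp
qed

lemma shifted_vector_mult_nth:
  fixes P :: "'a::comm_ring_1^'n^'n"
  shows "((mat t - P) *v x) $ i = t * x $ i - (P *v x) $ i"
  by (simp add: matrix_vector_mult_diff_rdistrib mat_vector_mult)

lemma shifted_system_min_ratio:
  fixes P :: "real^'n^'n"
  assumes P: "mat_nonneg P" and z: "\<And>i. z $ i > 0" and x: "(mat t - P) *v x = z"
  obtains b i where "\<And>j. b * z $ j \<le> x $ j" and "x $ i = b * z $ i"
    and "0 < b * (t * z $ i - (P *v z) $ i)"
proof -
  obtain i where imin: "\<And>j. x $ i / z $ i \<le> x $ j / z $ j"
    using finite_type_argmin[of "\<lambda>j. x $ j / z $ j"] by blast
  define b where "b = x $ i / z $ i"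
  have bz: "b * z $ j \<le> x $ j" for j
    using imin[of j] z[of j] unfolding b_def by (simp add: le_divide_eq)
  have xi: "x $ i = b * z $ i"
    unfolding b_def using z[of i] by simp
  have "b * (P *v z) $ i \<le> (P *v x) $ i"
    using matrix_vector_mult_mono[OF P, of "b *\<^sub>R z" x i] bz
    by (simp add: matrix_vector_mult_scaleR)
  moreover have "z $ i = t * x $ i - (P *v x) $ i"
    using arg_cong[OF x, of "\<lambda>y. y $ i"] by (simp add: shifted_vector_mult_nth)
  ultimately have "z $ i \<le> b * (t * z $ i - (P *v z) $ i)"
    unfolding xi by (simp add: algebra_simps)
  with z[of i] have "0 < b * (t * z $ i - (P *v z) $ i)" by linarith
  with bz xi show ?thesis by (rule that)
qed

lemma continuous_on_det:
  fixes f :: "real \<Rightarrow> real^'n^'n"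
  assumes "\<And>i j. continuous_on S (\<lambda>t. f t $ i $ j)"
  shows "continuous_on S (\<lambda>t. det (f t))"
  unfolding det_def by (intro continuous_intros assms)

lemma continuous_on_Min_finite:
  fixes g :: "'k \<Rightarrow> real \<Rightarrow> real"
  assumes "finite K" "K \<noteq> {}" "\<And>k. k \<in> K \<Longrightarrow> continuous_on S (g k)"
  shows "continuous_on S (\<lambda>t. Min ((\<lambda>k. g k t) ` K))"
  using assms
proof (induction K rule: finite_ne_induct)
  case (insert x F)
  then have "continuous_on S (\<lambda>t. min (g x t) (Min ((\<lambda>k. g k t) ` F)))"
    by (intro continuous_on_min) auto
  with insert show ?case by (simp add: Min_insert)
qed simp

lemma shifted_system_positive:
  fixes P :: "real^'n^'n"
  assumes P: "mat_nonneg P" and z: "\<And>i. z $ i > 0" and x: "(mat t - P) *v x = z"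
    and sign: "\<And>i. (P *v z) $ i < t * z $ i \<or> 0 \<le> x $ i"
  shows "0 < x $ k"
proof -
  obtain b i where bz: "\<And>j. b * z $ j \<le> x $ j" and xi: "x $ i = b * z $ i"
    and pos: "0 < b * (t * z $ i - (P *v z) $ i)"
    using shifted_system_min_ratio[OF P z x] by blast
  have "0 < b"
    using pos sign[of i] z[of i] unfolding xi by (auto simp: zero_less_mult_iff zero_le_mult_iff)
  then show ?thesis
    using bz[of k] z[of k] by (smt (verit) mult_pos_pos)
qed

lemma shifted_system_negative_entry:
  fixes P :: "real^'n^'n"
  assumes P: "mat_nonneg P" and z: "\<And>i. z $ i > 0" and x: "(mat c - P) *v x = z"
    and c: "\<And>i. c * z $ i \<le> (P *v z) $ i"
  obtains i where "x $ i < 0"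
proof -
  obtain b i where xi: "x $ i = b * z $ i" and pos: "0 < b * (c * z $ i - (P *v z) $ i)"
    using shifted_system_min_ratio[OF P z x] by blast
  have "b < 0"
    using pos c[of i] by (auto simp: zero_less_mult_iff)
  with xi z[of i] show ?thesis
    by (metis mult_neg_pos that)
qed

lemma exists_strict_subinvariant_shift:
  fixes P :: "real^'n^'n"
  assumes P: "mat_nonneg P" and z: "\<And>i. z $ i > 0"
  obtains T where "c < T" "\<And>i. (P *v z) $ i < T * z $ i"
proof -
  define T where "T = \<bar>c\<bar> + 1 + (\<Sum>i\<in>UNIV. (P *v z) $ i / z $ i)"
  have ratio_nonneg: "0 \<le> (P *v z) $ i / z $ i" for i
    using matrix_vector_mult_nonneg[OF P, of z i] z by (simp add: less_imp_le)
  then have "c < T"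
    unfolding T_def by (smt (verit) sum_nonneg)
  moreover have "(P *v z) $ i < T * z $ i" for i
  proof -
    have "(P *v z) $ i / z $ i \<le> (\<Sum>i\<in>UNIV. (P *v z) $ i / z $ i)"
      by (rule member_le_sum) (use ratio_nonneg in auto)
    then have "(P *v z) $ i / z $ i < T"
      unfolding T_def by linarith
    then show ?thesis
      using z[of i] by (simp add: divide_less_eq)
  qed
  ultimately show ?thesis by (rule that)
qed

lemma continuous_on_shifted_solution:
  fixes P :: "real^'n^'n"
  assumes "\<And>t. t \<in> S \<Longrightarrow> det (mat t - P) \<noteq> 0"
  shows "continuous_on S (\<lambda>t. det (\<chi> i j. if j = k then z $ i else (mat t - P) $ i $ j) / det (mat t - P))"
proof (intro continuous_on_divide ballI)
  have entry: "continuous_on S (\<lambda>t. (mat t - P) $ i $ j)" for i j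
    by (cases "i = j") (auto simp: mat_def intro!: continuous_intros)
  show "continuous_on S (\<lambda>t. det (mat t - P))"
    by (rule continuous_on_det) (rule entry)
  show "continuous_on S (\<lambda>t. det (\<chi> i j. if j = k then z $ i else (mat t - P) $ i $ j))"
  proof (rule continuous_on_det)
    fix i j
    show "continuous_on S (\<lambda>t. (\<chi> i j. if j = k then z $ i else (mat t - P) $ i $ j) $ i $ j)"
      using entry by (cases "j = k") auto
  qed
qed (use assms in auto)

lemma real_eigenvalue_ge_of_superinvariant:
  fixes P :: "real^'n^'n"
  assumes P: "mat_nonneg P" and z: "\<And>i. z $ i > 0"
    and c: "\<And>i. c * z $ i \<le> (P *v z) $ i"
  obtains t x where "c \<le> t" "x \<noteq> 0" "P *v x = t *\<^sub>R x"
proof (rule ccontr)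
  (* Otherwise the solution X t of (t I - P) X = z is continuous in t >= c. Its smallest entry
     is negative at t = c and positive for large t, so it vanishes somewhere; but a nonnegative
     solution is positive. *)
  note eigenvalue = that
  assume "\<not> thesis"
  have det_nonzero: "det (mat t - P) \<noteq> 0" if "c \<le> t" for t
    using eigenvalue \<open>\<not> thesis\<close> that
    unfolding det_eq_0_iff_kernel shifted_kernel_iff scalar_mult_eq_scaleR by blast
  define X where "X t = (\<chi> k. det (\<chi> i j. if j = k then z $ i else (mat t - P) $ i $ j) / det (mat t - P))"
    for t
  have X: "(mat t - P) *v X t = z" if "c \<le> t" for t
    using cramer[OF det_nonzero[OF that], of "X t" z] unfolding X_def by simp
  define h where "h t = Min (range (\<lambda>k. X t $ k))" for t
  have h_pos: "0 < h t" if "c \<le> t" and "\<And>i. (P *v z) $ i < t * z $ i \<or> 0 \<le> X t $ i" for t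
    unfolding h_def using shifted_system_positive[OF P z X[OF that(1)] that(2)] by simp
  obtain i where "X c $ i < 0"
    using shifted_system_negative_entry[OF P z X[OF order_refl] c] by blast
  then have "h c < 0"
    unfolding h_def by (subst Min_less_iff) auto
  obtain T where T: "c < T" "\<And>i. (P *v z) $ i < T * z $ i"
    using exists_strict_subinvariant_shift[OF P z, of c] by blast
  then have "0 < h T"
    using h_pos by simp
  moreover have "continuous_on {c..T} h"
    unfolding h_def X_def vec_lambda_beta
    by (intro continuous_on_Min_finite continuous_on_shifted_solution det_nonzero) auto
  ultimately obtain t where t: "c \<le> t" "h t = 0"
    using IVT'[of h c 0 T] \<open>h c < 0\<close> \<open>c < T\<close> by (auto simp: less_imp_le)
  then have "0 \<le> X t $ k" for k
    using Min_le[of "range (\<lambda>k. X t $ k)" "X t $ k"] unfolding h_def by simp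
  with t h_pos[of t] show False by simp
qed

lemma spectral_radius_bounds:
  fixes P :: "real^'n^'n"
  assumes P: "mat_nonneg P" and z: "\<And>i. z $ i > 0"
    and c: "\<And>i. c * z $ i \<le> (P *v z) $ i"
    and d: "\<And>i. (P *v z) $ i \<le> d * z $ i"
  shows "c \<le> spectral_radius P" and "spectral_radius P \<le> d"
proof -
  define E where "E = {l. \<exists>x. x \<noteq> 0 \<and> map_matrix complex_of_real P *v x = l *s x}"
  have radius: "spectral_radius P = Max (cmod ` E)"
    unfolding spectral_radius_def E_def map_matrix_def by (metis image_Collect)
  have fin: "finite (cmod ` E)"
    unfolding E_def by (intro finite_imageI finite_eigenvalues)
  obtain t x where tx: "c \<le> t" "x \<noteq> 0" "P *v x = t *\<^sub>R x"
    using real_eigenvalue_ge_of_superinvariant[OF P z c] by blast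
  define xc where "xc = (\<chi> i. complex_of_real (x $ i))"
  have "xc \<noteq> 0"
    using tx(2) by (simp add: vec_eq_iff xc_def)
  moreover have "map_matrix complex_of_real P *v xc = complex_of_real t *s xc"
    using tx(3) by (simp add: xc_def vec_eq_iff matrix_vector_mult_def flip: of_real_mult of_real_sum)
  ultimately have "complex_of_real t \<in> E" unfolding E_def by blast
  then have "c \<le> Max (cmod ` E)"
    using fin tx(1) by (intro Max_ge_iff[THEN iffD2]) force+
  then show "c \<le> spectral_radius P" unfolding radius .
  show "spectral_radius P \<le> d"
    unfolding radius using fin \<open>complex_of_real t \<in> E\<close>
    by (subst Max_le_iff) (auto simp: E_def intro: eigenvalue_norm_le_of_subinvariant[OF P z d])
qed

lemma perturbed_eigenvector_identity:
  fixes R W B :: "real^'n^'n"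
  assumes "(R ** W) *v z = \<rho> *\<^sub>R z"
  shows "(R ** W - \<omega> *\<^sub>R (B ** (mat 1 - R ** W))) *v z = \<rho> *\<^sub>R z - (\<omega> * (1 - \<rho>)) *\<^sub>R (B *v z)"
proof -
  have "(mat 1 - R ** W) *v z = (1 - \<rho>) *\<^sub>R z"
    by (simp only: matrix_vector_mult_diff_rdistrib matrix_vector_mul_lid assms scaleR_diff_left scaleR_one)
  then have "(B ** (mat 1 - R ** W)) *v z = (1 - \<rho>) *\<^sub>R (B *v z)"
    by (simp only: matrix_vector_mul_assoc[symmetric] matrix_vector_mult_scaleR)
  then show ?thesis
    by (simp add: matrix_vector_mult_diff_rdistrib matrix_vector_mult_scaleR_left assms)
qed

lemma ratio_extrema_bounds:
  fixes u z :: "real^'n"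
  assumes z: "\<And>i. 0 < z $ i" and u: "\<And>i. 0 \<le> u $ i" "\<And>i. u $ i \<le> \<rho> * z $ i"
  defines "smin \<equiv> Min {u $ i / z $ i | i. True}" and "smax \<equiv> Max {u $ i / z $ i | i. True}"
  shows "0 \<le> smin" "smin \<le> \<rho>" "0 \<le> smax" "smax \<le> \<rho>"
    and "\<And>i. smin * z $ i \<le> u $ i" "\<And>i. u $ i \<le> smax * z $ i"
proof -
  have range: "{u $ i / z $ i | i. True} = range (\<lambda>i. u $ i / z $ i)"
    by auto
  have ratio: "0 \<le> u $ i / z $ i" "u $ i / z $ i \<le> \<rho>" for i
    using z[of i] u[of i] by (simp_all add: divide_le_eq)
  have min: "smin \<le> u $ i / z $ i" and max: "u $ i / z $ i \<le> smax" for i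
    unfolding smin_def smax_def range by simp_all
  fix i0 :: 'n
  show "0 \<le> smin" "smax \<le> \<rho>"
    unfolding smin_def smax_def range using ratio by simp_all
  show "smin \<le> \<rho>" "0 \<le> smax"
    using min[of i0] max[of i0] ratio[of i0] by simp_all
  show "smin * z $ i \<le> u $ i" "u $ i \<le> smax * z $ i" for i
    using min[of i] max[of i] z[of i] by (simp_all add: le_divide_eq divide_le_eq)
qed

lemma spectral_radius_perturbed_eigenvector:
  fixes P :: "real^'n^'n"
  assumes P: "mat_nonneg P" and z: "\<And>i. 0 < z $ i"
    and Pz: "P *v z = \<rho> *\<^sub>R z - t *\<^sub>R u" and t: "0 \<le> t"
    and u: "\<And>i. smin * z $ i \<le> u $ i" "\<And>i. u $ i \<le> smax * z $ i"
  shows "\<rho> - t * smax \<le> spectral_radius P" and "spectral_radius P \<le> \<rho> - t * smin"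
proof -
  have "(\<rho> - t * smax) * z $ i \<le> (P *v z) $ i" and "(P *v z) $ i \<le> (\<rho> - t * smin) * z $ i" for i
    using mult_left_mono[OF u(1)[of i] t] mult_left_mono[OF u(2)[of i] t]
    unfolding Pz by (simp_all add: algebra_simps)
  then show "\<rho> - t * smax \<le> spectral_radius P" and "spectral_radius P \<le> \<rho> - t * smin"
    using spectral_radius_bounds[OF P z] by blast+
qed

section \<open>Irreducible stochastic matrices\<close>

lemma irreducible_mat_closed_set:
  fixes M :: "real^'n^'n"
  assumes irr: "irreducible_mat M" and M: "mat_nonneg M" and a: "a \<in> S"
    and closed: "\<And>p q. p \<in> S \<Longrightarrow> 0 < M $ p $ q \<Longrightarrow> q \<in> S"
  shows "j \<in> S"
proof -
  have "j \<in> S" if "p \<in> S" "0 < matpow M k $ p $ j" for k p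
    using that
  proof (induction k arbitrary: p)
    case 0
    then show ?case by (auto simp: mat_def split: if_splits)
  next
    case (Suc k)
    then have "0 < (\<Sum>l\<in>UNIV. M $ p $ l * matpow M k $ l $ j)"
      by (simp add: matrix_matrix_mult_def)
    then obtain l where l: "0 < M $ p $ l * matpow M k $ l $ j"
      using sum_nonpos[of UNIV "\<lambda>l. M $ p $ l * matpow M k $ l $ j"] by (meson not_less)
    have "0 \<le> M $ p $ l" "0 \<le> matpow M k $ l $ j"
      using M mat_nonneg_matpow[OF M, of k] unfolding mat_nonneg_def by auto
    with l have "0 < M $ p $ l" "0 < matpow M k $ l $ j"
      by (auto simp: zero_less_mult_iff)
    then show ?case using Suc closed by blast
  qed
  moreover obtain k where "0 < matpow M k $ a $ j"
    using irr unfolding irreducible_mat_def by blast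
  ultimately show ?thesis using a by blast
qed

lemma row_stochastic_row_sum:
  assumes "row_stochastic M"
  shows "(\<Sum>l\<in>UNIV. M $ p $ l) = 1"
proof -
  have "(M *v ones) $ p = 1"
    using assms unfolding row_stochastic_def by simp
  then show ?thesis by (simp add: matrix_vector_mult_def)
qed

lemma irreducible_stochastic_subharmonic:
  fixes B M :: "real^'n^'n"
  assumes M: "row_stochastic M" "irreducible_mat M"
    and B: "mat_nonneg B" "mat_le B M"
    and y: "\<And>i. y $ i \<le> (B *v y) $ i" and pos: "0 < y $ i0"
  shows "B = M" and "y $ i = y $ j"
proof -
  obtain m where m: "\<And>j. y $ j \<le> y $ m"
    using finite_type_argmax[of "\<lambda>j. y $ j"] by blast
  define S where "S = {p. y $ p = y $ m}"
  (* At a maximum p of y the chain y_p <= (B y)_p <= (sum_l B_pl) y_p <= y_p is tight: row p of B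
     equals row p of M, and y is maximal wherever B_pl > 0. Irreducibility spreads this to all p. *)
  have row: "B $ p $ l = M $ p $ l \<and> (0 < B $ p $ l \<longrightarrow> l \<in> S)" if "p \<in> S" for p l
  proof -
    have ym: "0 < y $ m" using pos m[of i0] by simp
    have t1: "0 \<le> (M $ p $ l - B $ p $ l) * y $ m" for l
      using B(2) ym unfolding mat_le_def by simp
    have t2: "0 \<le> B $ p $ l * (y $ m - y $ l)" for l
      using B(1) m[of l] unfolding mat_nonneg_def by simp
    define t where "t l = (M $ p $ l - B $ p $ l) * y $ m + B $ p $ l * (y $ m - y $ l)" for l
    have t_nonneg: "0 \<le> t l" for l
      unfolding t_def using t1 t2 by (rule add_nonneg_nonneg)
    have "t l = M $ p $ l * y $ m - B $ p $ l * y $ l" for l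
      unfolding t_def by (simp add: algebra_simps)
    then have "(\<Sum>l\<in>UNIV. t l) = (\<Sum>l\<in>UNIV. M $ p $ l) * y $ m - (B *v y) $ p"
      by (simp add: sum_subtractf sum_distrib_right matrix_vector_mult_def)
    also have "\<dots> \<le> 0"
      using y[of p] that row_stochastic_row_sum[OF M(1)] unfolding S_def by simp
    finally have "t l = 0"
      using sum_nonneg_eq_0_iff[of UNIV t] t_nonneg by (simp add: order_antisym sum_nonneg)
    then have "(M $ p $ l - B $ p $ l) * y $ m = 0" "B $ p $ l * (y $ m - y $ l) = 0"
      using t1[of l] t2[of l] unfolding t_def by linarith+
    then show ?thesis
      using ym unfolding S_def by auto
  qed
  have S: "p \<in> S" for p
  proof (rule irreducible_mat_closed_set[OF M(2)])
    show "mat_nonneg M" using M(1) unfolding row_stochastic_def by simp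
    show "m \<in> S" unfolding S_def by simp
  qed (use row in force)
  show "B = M" using row S by (simp add: vec_eq_iff)
  show "y $ i = y $ j" using S[of i] S[of j] unfolding S_def by simp
qed

lemma irreducible_stochastic_fixed_vector:
  fixes M :: "real^'n^'n"
  assumes M: "row_stochastic M" "irreducible_mat M" and y: "M *v y = y"
  obtains c where "y = c *\<^sub>R ones"
proof -
  fix i0 :: 'n
  define y' where "y' = y + (1 - y $ i0) *\<^sub>R ones"
  have "M *v y' = y'"
    using y M(1) unfolding y'_def row_stochastic_def
    by (simp add: matrix_vector_right_distrib matrix_vector_mult_scaleR)
  then have "y' $ i = y' $ i0" for i
    using irreducible_stochastic_subharmonic[OF M _ mat_le_refl, of y' i0]
    using M(1) unfolding row_stochastic_def by (simp add: y'_def)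
  then have "y = y $ i0 *\<^sub>R ones"
    unfolding y'_def by (simp add: vec_eq_iff)
  then show ?thesis by (rule that)
qed

lemma irreducible_stochastic_resolvent_nonneg:
  fixes B M :: "real^'n^'n"
  assumes M: "row_stochastic M" "irreducible_mat M"
    and B: "mat_nonneg B" "mat_le B M" "B \<noteq> M"
    and x: "\<And>i. 0 \<le> ((mat 1 - B) *v x) $ i"
  shows "0 \<le> x $ i"
proof (rule ccontr)
  assume "\<not> 0 \<le> x $ i"
  moreover have "(- x) $ j \<le> (B *v (- x)) $ j" for j
    using x[of j] by (simp add: matrix_vector_mult_diff_rdistrib matrix_vector_mult_uminus_right)
  ultimately have "B = M"
    using irreducible_stochastic_subharmonic(1)[OF M B(1,2), of "- x" i] by simp
  with B(3) show False ..
qed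

lemma irreducible_stochastic_resolvent:
  fixes B M :: "real^'n^'n"
  assumes M: "row_stochastic M" "irreducible_mat M"
    and B: "mat_nonneg B" "mat_le B M" "B \<noteq> M"
  shows "invertible (mat 1 - B)" and "mat_nonneg (matrix_inv (mat 1 - B))"
proof -
  note resolvent_nonneg = irreducible_stochastic_resolvent_nonneg[OF M B]
  have "x = 0" if "(mat 1 - B) *v x = 0" for x
  proof -
    have "0 \<le> x $ i" "0 \<le> (- x) $ i" for i
      using resolvent_nonneg[of x i] resolvent_nonneg[of "- x" i] that
      by (simp_all add: matrix_vector_mult_uminus_right)
    then show ?thesis by (simp add: vec_eq_iff order_antisym)
  qed
  then show inv: "invertible (mat 1 - B)"
    unfolding invertible_left_inverse matrix_left_invertible_ker by blast
  show "mat_nonneg (matrix_inv (mat 1 - B))"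
    unfolding mat_nonneg_def
  proof (intro allI)
    fix i j
    have column: "(mat 1 - B) *v (matrix_inv (mat 1 - B) *v axis j 1) = axis j 1"
      using matrix_inv_invertible(1)[OF inv] by (simp add: matrix_vector_mul_assoc)
    have "0 \<le> (matrix_inv (mat 1 - B) *v axis j 1) $ i"
      by (rule resolvent_nonneg) (simp only: column, simp add: axis_def)
    then show "0 \<le> matrix_inv (mat 1 - B) $ i $ j"
      by (simp add: matrix_vector_mult_axis)
  qed
qed

section \<open>Minimal nonnegative solutions of matrix power series equations\<close>

definition substochastic :: "real^'n^'n \<Rightarrow> bool" where
  "substochastic X \<longleftrightarrow> mat_nonneg X \<and> (\<forall>i. (X *v ones) $ i \<le> 1)"

lemma mat_nonneg_entry_le_row_sum: "mat_nonneg M \<Longrightarrow> M $ i $ j \<le> (M *v ones) $ i"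
  unfolding mat_nonneg_def by (simp add: matrix_vector_mult_def member_le_sum)

lemma substochastic_mult_vector_le:
  assumes "substochastic X" "\<And>j. x $ j \<le> c" "0 \<le> c"
  shows "(X *v x) $ i \<le> c"
proof -
  have "(X *v x) $ i \<le> (X *v (c *\<^sub>R ones)) $ i"
    using assms(1,2) unfolding substochastic_def by (intro matrix_vector_mult_mono) auto
  also have "\<dots> \<le> c"
    using assms(1,3) unfolding substochastic_def
    by (simp add: matrix_vector_mult_scaleR mult_left_le)
  finally show ?thesis .
qed

lemma substochastic_one: "substochastic (mat 1)"
  by (simp add: substochastic_def mat_nonneg_one)

lemma substochastic_mult:
  assumes "substochastic X" "substochastic Y"
  shows "substochastic (X ** Y)"
  using assms substochastic_mult_vector_le[OF assms(1), of "Y *v ones" 1]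
  unfolding substochastic_def by (auto simp: mat_nonneg_mult matrix_vector_mul_assoc)

lemma substochastic_matpow: "substochastic X \<Longrightarrow> substochastic (matpow X k)"
  by (induction k) (simp_all add: substochastic_one substochastic_mult)

lemma substochastic_le:
  assumes "mat_nonneg X" "mat_le X Y" "substochastic Y"
  shows "substochastic X"
proof -
  have "(X *v ones) $ i \<le> (Y *v ones) $ i" for i
    using assms(2) unfolding mat_le_def matrix_vector_mult_def by (simp add: sum_mono)
  with assms(1,3) show ?thesis
    unfolding substochastic_def by (meson order_trans)
qed

lemma tendsto_matrix_mult:
  fixes f g :: "'a \<Rightarrow> real^'n^'n"
  assumes "(f \<longlongrightarrow> A) F" "(g \<longlongrightarrow> B) F"
  shows "((\<lambda>t. f t ** g t) \<longlongrightarrow> A ** B) F"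
proof -
  have entries: "((\<lambda>t. (f t ** g t) $ i $ j) \<longlongrightarrow> (A ** B) $ i $ j) F" for i j
    unfolding matrix_matrix_mult_def vec_lambda_beta
    by (intro tendsto_sum tendsto_mult tendsto_vec_nth assms)
  show ?thesis
    by (intro vec_tendstoI entries)
qed

lemma tendsto_matpow:
  fixes f :: "'a \<Rightarrow> real^'n^'n"
  assumes "(f \<longlongrightarrow> A) F"
  shows "((\<lambda>t. matpow (f t) k) \<longlongrightarrow> matpow A k) F"
  by (induction k) (simp_all add: tendsto_matrix_mult assms)

lemma mat_le_incseq_convergent:
  fixes X :: "nat \<Rightarrow> real^'n^'m"
  assumes "\<And>m. mat_le (X m) (X (Suc m))" "\<And>m i j. X m $ i $ j \<le> C"
  obtains L where "X \<longlonglongrightarrow> L"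
proof -
  have "(\<lambda>m. X m $ i $ j) \<longlonglongrightarrow> (SUP m. X m $ i $ j)" for i j
    using assms(1) unfolding mat_le_def
    by (intro LIMSEQ_incseq_SUP[OF bdd_aboveI2[OF assms(2)]] incseq_SucI) auto
  then have "X \<longlonglongrightarrow> (\<chi> i j. SUP m. X m $ i $ j)"
    by (intro vec_tendstoI) simp
  then show ?thesis by (rule that)
qed

lemma substochastic_limit:
  assumes lim: "X \<longlonglongrightarrow> L" and X: "\<And>m. substochastic (X m)"
  shows "substochastic L"
  unfolding substochastic_def mat_nonneg_def
proof safe
  fix i j
  show "0 \<le> L $ i $ j"
    using X unfolding substochastic_def mat_nonneg_def
    by (intro LIMSEQ_le_const[OF tendsto_vec_nth[OF tendsto_vec_nth[OF lim]]]) auto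
  have "(\<lambda>m. (X m *v ones) $ i) \<longlonglongrightarrow> (L *v ones) $ i"
    by (intro tendsto_vec_nth bounded_linear.tendsto[OF bounded_linear_matrix_vector_mult_left] lim)
  then show "(L *v ones) $ i \<le> 1"
    using X unfolding substochastic_def by (intro LIMSEQ_le_const2) auto
qed

context
  fixes a :: "nat \<Rightarrow> real^'n^'n"
  assumes a_nonneg: "\<And>k. mat_nonneg (a k)" and a_summable: "summable a"
begin

lemma power_series_term_bounds:
  assumes "substochastic X"
  shows "0 \<le> (a k ** matpow X k) $ i $ j" and "(a k ** matpow X k) $ i $ j \<le> (a k *v ones) $ i"
proof -
  have nonneg: "mat_nonneg (a k ** matpow X k)"
    using assms a_nonneg unfolding substochastic_def by (simp add: mat_nonneg_mult mat_nonneg_matpow)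
  then show "0 \<le> (a k ** matpow X k) $ i $ j"
    unfolding mat_nonneg_def by simp
  have "(a k ** matpow X k) $ i $ j \<le> (a k *v (matpow X k *v ones)) $ i"
    using mat_nonneg_entry_le_row_sum[OF nonneg] by (simp add: matrix_vector_mul_assoc)
  also have "\<dots> \<le> (a k *v ones) $ i"
    using substochastic_matpow[OF assms] a_nonneg unfolding substochastic_def
    by (intro matrix_vector_mult_mono) auto
  finally show "(a k ** matpow X k) $ i $ j \<le> (a k *v ones) $ i" .
qed

lemma summable_row_sums: "summable (\<lambda>k. (a k *v ones) $ i)"
  using summable_vec_nth[OF bounded_linear.summable[OF bounded_linear_matrix_vector_mult_left a_summable]] .

lemma power_series_summable:
  assumes "substochastic X"
  shows "summable (\<lambda>k. a k ** matpow X k)"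
proof (rule summable_matrixI)
  fix i j
  show "summable (\<lambda>k. (a k ** matpow X k) $ i $ j)"
    by (rule summable_comparison_test'[OF summable_row_sums])
       (use power_series_term_bounds[OF assms] in auto)
qed

lemma power_series_substochastic:
  assumes "substochastic (suminf a)" "substochastic X"
  shows "substochastic (\<Sum>k. a k ** matpow X k)"
  unfolding substochastic_def
proof
  note summable = power_series_summable[OF assms(2)]
  show "mat_nonneg (\<Sum>k. a k ** matpow X k)"
    unfolding mat_nonneg_def suminf_matrix_nth[OF summable]
    using power_series_term_bounds(1)[OF assms(2)] summable_matrix_nth[OF summable]
    by (auto intro: suminf_nonneg)
  show "\<forall>i. ((\<Sum>k. a k ** matpow X k) *v ones) $ i \<le> 1"
  proof
    fix i
    have row_sum: "(suminf f *v ones) $ i = (\<Sum>k. (f k *v ones) $ i)" if "summable f" for f :: "nat \<Rightarrow> real^'n^'n"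
      using bounded_linear.suminf[OF bounded_linear_matrix_vector_mult_left that]
        sums_vec_nth[OF summable_sums[OF bounded_linear.summable[OF bounded_linear_matrix_vector_mult_left that]]]
      by (simp add: sums_iff)
    have "((\<Sum>k. a k ** matpow X k) *v ones) $ i = (\<Sum>k. (a k *v (matpow X k *v ones)) $ i)"
      unfolding row_sum[OF summable] by (simp add: matrix_vector_mul_assoc)
    also have "\<dots> \<le> (\<Sum>k. (a k *v ones) $ i)"
    proof (rule suminf_le)
      show "(a k *v (matpow X k *v ones)) $ i \<le> (a k *v ones) $ i" for k
        using substochastic_matpow[OF assms(2)] a_nonneg unfolding substochastic_def
        by (intro matrix_vector_mult_mono) auto
      show "summable (\<lambda>k. (a k *v (matpow X k *v ones)) $ i)"
        using summable_vec_nth[OF bounded_linear.summable[OF bounded_linear_matrix_vector_mult_left summable]]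
        by (simp add: matrix_vector_mul_assoc)
    qed (rule summable_row_sums)
    also have "\<dots> = (suminf a *v ones) $ i"
      by (rule row_sum[OF a_summable, symmetric])
    also have "\<dots> \<le> 1"
      using assms(1) unfolding substochastic_def by blast
    finally show "((\<Sum>k. a k ** matpow X k) *v ones) $ i \<le> 1" .
  qed
qed

lemma power_series_mono:
  assumes "mat_nonneg X" "mat_le X Y" "substochastic Y"
  shows "mat_le (\<Sum>k. a k ** matpow X k) (\<Sum>k. a k ** matpow Y k)"
  unfolding mat_le_def
proof (intro allI)
  fix i j
  have X: "substochastic X" using substochastic_le[OF assms] .
  show "(\<Sum>k. a k ** matpow X k) $ i $ j \<le> (\<Sum>k. a k ** matpow Y k) $ i $ j"
    unfolding suminf_matrix_nth[OF power_series_summable[OF X]]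
      suminf_matrix_nth[OF power_series_summable[OF assms(3)]]
    using mat_le_mult[OF a_nonneg _ mat_le_refl mat_le_matpow[OF assms(1,2)]] mat_nonneg_matpow[OF assms(1)]
    by (intro suminf_le summable_matrix_nth power_series_summable X assms(3)) (auto simp: mat_le_def)
qed

lemma power_series_tendsto:
  assumes "X \<longlonglongrightarrow> L" "\<And>m. substochastic (X m)" "substochastic L"
  shows "(\<lambda>m. \<Sum>k. a k ** matpow (X m) k) \<longlonglongrightarrow> (\<Sum>k. a k ** matpow L k)"
proof (rule vec_tendstoI, rule vec_tendstoI)
  fix i j
  have "(\<lambda>m. \<Sum>k. (a k ** matpow (X m) k) $ i $ j) \<longlonglongrightarrow> (\<Sum>k. (a k ** matpow L k) $ i $ j)"
  proof (rule tannerys_theorem[THEN conjunct2, THEN conjunct2])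
    show "(\<lambda>m. (a k ** matpow (X m) k) $ i $ j) \<longlonglongrightarrow> (a k ** matpow L k) $ i $ j" for k
      by (intro tendsto_vec_nth tendsto_matrix_mult tendsto_const tendsto_matpow assms(1))
    show "\<forall>\<^sub>F (k, m) in at_top \<times>\<^sub>F sequentially. norm ((a k ** matpow (X m) k) $ i $ j) \<le> (a k *v ones) $ i"
      using power_series_term_bounds[OF assms(2)] by (intro always_eventually) auto
  qed (simp_all add: summable_row_sums)
  then show "(\<lambda>m. (\<Sum>k. a k ** matpow (X m) k) $ i $ j) \<longlonglongrightarrow> (\<Sum>k. a k ** matpow L k) $ i $ j"
    using assms(2,3) by (simp add: suminf_matrix_nth power_series_summable)
qed


lemma power_series_iterates:
  assumes "substochastic (suminf a)"
  defines "F \<equiv> \<lambda>X. \<Sum>k. a k ** matpow X k"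
  shows "substochastic ((F ^^ m) 0) \<and> mat_le ((F ^^ m) 0) ((F ^^ Suc m) 0)"
proof (induction m)
  case 0
  have "substochastic (F 0)"
    unfolding F_def by (rule power_series_substochastic[OF assms(1)]) (simp add: substochastic_def mat_nonneg_def)
  then show ?case
    by (simp add: substochastic_def mat_nonneg_def mat_le_def)
next
  case (Suc m)
  then have "substochastic ((F ^^ Suc m) 0)"
    unfolding F_def by (simp add: power_series_substochastic[OF assms(1)])
  moreover have "mat_le (F ((F ^^ m) 0)) (F ((F ^^ Suc m) 0))"
    using Suc calculation unfolding F_def by (intro power_series_mono) (auto simp: substochastic_def)
  ultimately show ?case by simp
qed

lemma power_series_substochastic_fixed_point:
  assumes "substochastic (suminf a)"
  obtains L where "substochastic L" "(\<lambda>k. a k ** matpow L k) sums L"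
proof -
  define F where "F X = (\<Sum>k. a k ** matpow X k)" for X
  define X where "X m = (F ^^ m) 0" for m
  have X: "substochastic (X m)" "mat_le (X m) (X (Suc m))" for m
    using power_series_iterates[OF assms] unfolding X_def F_def by (simp_all add: fun_eq_iff)
  have "X m $ i $ j \<le> 1" for m i j
    using X(1)[of m] mat_nonneg_entry_le_row_sum[of "X m" i j] unfolding substochastic_def
    by (meson order_trans)
  then obtain L where lim: "X \<longlonglongrightarrow> L"
    using mat_le_incseq_convergent[of X 1] X(2) by blast
  have L: "substochastic L"
    using lim X(1) by (rule substochastic_limit)
  have "F L = L"
  proof (rule LIMSEQ_unique)
    show "(\<lambda>m. F (X m)) \<longlonglongrightarrow> F L"
      unfolding F_def using X(1) L by (intro power_series_tendsto lim)
    show "(\<lambda>m. F (X m)) \<longlonglongrightarrow> L"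
      using LIMSEQ_Suc[OF lim] by (simp add: X_def)
  qed
  with L show ?thesis
    using summable_sums[OF power_series_summable[OF L]] that unfolding F_def by metis
qed

lemma minimal_solution_substochastic:
  assumes "substochastic (suminf a)" "mat_nonneg G"
    and "\<And>X. mat_nonneg X \<Longrightarrow> (\<lambda>k. a k ** matpow X k) sums X \<Longrightarrow> mat_le G X"
  shows "substochastic G"
proof -
  obtain L where "substochastic L" "(\<lambda>k. a k ** matpow L k) sums L"
    using power_series_substochastic_fixed_point[OF assms(1)] .
  with assms(2,3) show ?thesis
    unfolding substochastic_def by (metis substochastic_def substochastic_le)
qed

end

lemma power_series_fixed_vector:
  fixes a :: "nat \<Rightarrow> real^'n^'n"
  assumes "summable a" "(\<lambda>k. a k ** matpow G k) sums G" "G *v \<zeta> = \<zeta>"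
  shows "suminf a *v \<zeta> = \<zeta>"
proof -
  have "(\<lambda>k. (a k ** matpow G k) *v \<zeta>) sums (G *v \<zeta>)"
    by (rule bounded_linear.sums[OF bounded_linear_matrix_vector_mult_left assms(2)])
  moreover have "(a k ** matpow G k) *v \<zeta> = a k *v \<zeta>" for k
    by (simp add: matrix_vector_mul_assoc[symmetric] matpow_fixed_vector assms(3))
  moreover have "(\<lambda>k. a k *v \<zeta>) sums (suminf a *v \<zeta>)"
    by (rule bounded_linear.sums[OF bounded_linear_matrix_vector_mult_left summable_sums[OF assms(1)]])
  ultimately show ?thesis using assms(3) sums_unique2 by force
qed

section \<open>Cesaro averages\<close>

definition cesaro_mean :: "real^'n^'n \<Rightarrow> real^'n \<Rightarrow> nat \<Rightarrow> real^'n" where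
  "cesaro_mean G z N = (1 / real (Suc N)) *\<^sub>R (\<Sum>k\<le>N. matpow G k *v z)"

lemma cesaro_mean_drift:
  "G *v cesaro_mean G z N - cesaro_mean G z N = (1 / real (Suc N)) *\<^sub>R (matpow G (Suc N) *v z - z)"
proof -
  define p where "p k = matpow G k *v z" for k
  have "G *v (\<Sum>k\<le>N. p k) = (\<Sum>k\<le>N. p (Suc k))"
    unfolding p_def by (simp add: linear_sum[OF matrix_vector_mul_linear] matrix_vector_mul_assoc o_def)
  also have "\<dots> = (\<Sum>k\<le>N. p k) + (p (Suc N) - p 0)"
    using sum_telescope[of p N] by (simp add: sum_subtractf algebra_simps)
  finally have "G *v (\<Sum>k\<le>N. p k) - (\<Sum>k\<le>N. p k) = p (Suc N) - p 0"
    by simp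
  then show ?thesis
    unfolding cesaro_mean_def p_def
    by (simp add: matrix_vector_mult_scaleR flip: scaleR_diff_right)
qed

lemma cesaro_mean_drift_tendsto_zero:
  assumes B: "\<And>k. norm (matpow G k *v z) \<le> B"
  shows "(\<lambda>N. G *v cesaro_mean G z N - cesaro_mean G z N) \<longlonglongrightarrow> 0"
proof (rule tendsto_0_le[OF LIMSEQ_inverse_real_of_nat, where K = "2 * B"])
  show "\<forall>\<^sub>F N in sequentially.
      norm (G *v cesaro_mean G z N - cesaro_mean G z N) \<le> norm (inverse (real (Suc N))) * (2 * B)"
  proof (intro always_eventually allI)
    fix N
    have "norm (matpow G (Suc N) *v z - z) \<le> 2 * B"
      using norm_triangle_ineq4[of "matpow G (Suc N) *v z" z] B[of "Suc N"] B[of 0] by simp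
    then show "norm (G *v cesaro_mean G z N - cesaro_mean G z N) \<le> norm (inverse (real (Suc N))) * (2 * B)"
      unfolding cesaro_mean_drift by (simp add: divide_inverse mult_left_mono)
  qed
qed

lemma inner_cesaro_mean:
  assumes "r v* G = r"
  shows "r \<bullet> cesaro_mean G z N = r \<bullet> z"
proof -
  have "r v* matpow G k = r" for k
    by (induction k) (simp_all add: vector_matrix_mul_assoc[symmetric] assms)
  then have "r \<bullet> (matpow G k *v z) = r \<bullet> z" for k
    by (metis dot_lmul_matrix)
  then show ?thesis
    unfolding cesaro_mean_def by (simp add: inner_sum_right)
qed

lemma substochastic_orbit_bounds:
  assumes G: "substochastic G" and z: "\<And>i. 0 \<le> z $ i" "\<And>i. z $ i \<le> Z"
  shows "0 \<le> (matpow G k *v z) $ i" and "(matpow G k *v z) $ i \<le> Z"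
proof -
  have "substochastic (matpow G k)"
    using G by (rule substochastic_matpow)
  then show "0 \<le> (matpow G k *v z) $ i" "(matpow G k *v z) $ i \<le> Z"
    using z order_trans[OF z] unfolding substochastic_def
    by (auto intro: matrix_vector_mult_nonneg substochastic_mult_vector_le[OF \<open>substochastic (matpow G k)\<close>])
qed

lemma cesaro_mean_in_box:
  assumes G: "substochastic G" and z: "\<And>i. 0 \<le> z $ i" "\<And>i. z $ i \<le> Z"
  shows "cesaro_mean G z N \<in> cbox 0 (Z *\<^sub>R ones)"
proof -
  have "0 \<le> (\<Sum>k\<le>N. (matpow G k *v z) $ i) \<and> (\<Sum>k\<le>N. (matpow G k *v z) $ i) \<le> real (Suc N) * Z" for i
    using sum_mono[of "{..N}" "\<lambda>k. (matpow G k *v z) $ i" "\<lambda>k. Z"] substochastic_orbit_bounds[OF assms]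
    by (auto intro: sum_nonneg)
  then show ?thesis
    by (auto simp: cesaro_mean_def mem_box_cart sum_component field_simps)
qed

lemma left_invariant_fixed_vector:
  fixes G :: "real^'n^'n" and r z :: "real^'n"
  assumes G: "substochastic G" and r: "r v* G = r" and z: "\<And>i. 0 \<le> z $ i"
  obtains \<zeta> where "G *v \<zeta> = \<zeta>" "r \<bullet> \<zeta> = r \<bullet> z" "\<And>i. 0 \<le> \<zeta> $ i"
proof -
  define Z where "Z = Max (range (\<lambda>i. z $ i))"
  have Z: "z $ i \<le> Z" for i
    unfolding Z_def by (rule Max_ge) auto
  note box = cesaro_mean_in_box[OF G z Z]
  obtain B where "\<And>k. norm (matpow G k *v z) \<le> B"
  proof -
    have "bounded (range (\<lambda>k. matpow G k *v z))"
      using substochastic_orbit_bounds[OF G z Z]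
      by (intro bounded_subset[OF bounded_cbox[of 0 "Z *\<^sub>R ones"]]) (auto simp: mem_box_cart)
    then show ?thesis using that by (auto simp: bounded_iff)
  qed
  note drift = cesaro_mean_drift_tendsto_zero[OF this]
  obtain \<zeta> s where \<zeta>: "\<zeta> \<in> cbox 0 (Z *\<^sub>R ones)"
    and s: "strict_mono s" "(cesaro_mean G z \<circ> s) \<longlonglongrightarrow> \<zeta>"
    using compact_imp_seq_compact[OF compact_cbox] box unfolding seq_compact_def by metis
  have "G *v \<zeta> - \<zeta> = 0"
  proof (rule LIMSEQ_unique)
    show "(\<lambda>n. G *v (cesaro_mean G z \<circ> s) n - (cesaro_mean G z \<circ> s) n) \<longlonglongrightarrow> G *v \<zeta> - \<zeta>"
      by (intro tendsto_diff bounded_linear.tendsto[OF matrix_vector_mul_bounded_linear] s(2))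
    show "(\<lambda>n. G *v (cesaro_mean G z \<circ> s) n - (cesaro_mean G z \<circ> s) n) \<longlonglongrightarrow> 0"
      using LIMSEQ_subseq_LIMSEQ[OF drift s(1)] by (simp add: o_def)
  qed
  moreover have "r \<bullet> \<zeta> = r \<bullet> z"
  proof (rule LIMSEQ_unique)
    show "(\<lambda>n. r \<bullet> (cesaro_mean G z \<circ> s) n) \<longlonglongrightarrow> r \<bullet> \<zeta>"
      by (intro tendsto_intros s(2))
    show "(\<lambda>n. r \<bullet> (cesaro_mean G z \<circ> s) n) \<longlonglongrightarrow> r \<bullet> z"
      by (simp add: inner_cesaro_mean[OF r])
  qed
  moreover have "0 \<le> \<zeta> $ i" for i
    using \<zeta> by (simp add: mem_box_cart)
  ultimately show ?thesis using that by simp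
qed

section \<open>Matrices of M/G/1 type\<close>

(* For a k = A_(k-1): A - A_0 - sum_(i>=1) (i + 1) A_i = - sum_(i>=-1) i A_i. *)
lemma mean_drift_split:
  fixes a :: "nat \<Rightarrow> 'a::real_normed_vector"
  assumes "summable a" "summable (\<lambda>k. real k *\<^sub>R a k)"
  shows "suminf a - a 1 - (\<Sum>k. real (k + 2) *\<^sub>R a (k + 2)) = - (\<Sum>k. (real k - 1) *\<^sub>R a k)"
proof -
  have s0: "summable (\<lambda>k. a (k + 2))"
    using summable_ignore_initial_segment[OF assms(1)] .
  have s1: "summable (\<lambda>k. real (k + 2) *\<^sub>R a (k + 2))"
    using summable_ignore_initial_segment[OF assms(2)] .
  have s2: "summable (\<lambda>k. (real k - 1) *\<^sub>R a k)"
    using summable_diff[OF assms(2,1)] by (simp add: scaleR_diff_left)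
  have "suminf a = (\<Sum>k. a (k + 2)) + a 0 + a 1"
    using suminf_split_initial_segment[OF assms(1), of 2] by (simp add: numeral_2_eq_2)
  moreover have "(\<Sum>k. (real k - 1) *\<^sub>R a k) = (\<Sum>k. (real (k + 2) - 1) *\<^sub>R a (k + 2)) - a 0"
    using suminf_split_initial_segment[OF s2, of 2] by (simp add: numeral_2_eq_2)
  moreover have "(\<Sum>k. real (k + 2) *\<^sub>R a (k + 2))
      = (\<Sum>k. (real (k + 2) - 1) *\<^sub>R a (k + 2) + a (k + 2))"
    by (simp only: scaleR_diff_left scaleR_one diff_add_cancel)
  moreover have "\<dots> = (\<Sum>k. (real (k + 2) - 1) *\<^sub>R a (k + 2)) + (\<Sum>k. a (k + 2))"
    using summable_ignore_initial_segment[OF s2, of 2] s0 by (rule suminf_add[symmetric])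
  ultimately show ?thesis by (simp add: algebra_simps)
qed

(* For a k = A_(k-1), the series below is W = sum_(i>=1) A_i (I + G + ... + G^i). *)
context
  fixes a :: "nat \<Rightarrow> real^'n^'n" and G :: "real^'n^'n"
begin

lemma geometric_weight_series_summable:
  assumes a: "\<And>k. mat_nonneg (a k)" and ka: "summable (\<lambda>k. real k *\<^sub>R a k)"
    and G: "substochastic G"
  shows "summable (\<lambda>k. a (k + 2) ** (\<Sum>j\<le>k + 1. matpow G j))"
proof (rule summable_matrixI)
  fix i j
  define S where "S k = (\<Sum>j\<le>k + 1. matpow G j)" for k
  have S_nonneg: "mat_nonneg (S k)" for k
    unfolding S_def using G by (intro mat_nonneg_sum mat_nonneg_matpow) (simp add: substochastic_def)
  have S_rows: "(S k *v ones) $ l \<le> real (k + 2)" for k l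
  proof -
    have "(S k *v ones) $ l = (\<Sum>j\<le>k + 1. (matpow G j *v ones) $ l)"
      unfolding S_def matrix_vector_mult_sum_left by (simp add: sum_component)
    also have "\<dots> \<le> (\<Sum>j\<le>k + 1. 1)"
      using substochastic_matpow[OF G] unfolding substochastic_def by (intro sum_mono) blast
    finally show ?thesis by simp
  qed
  have nonneg: "0 \<le> (a (k + 2) ** S k) $ i $ j" for k
    using mat_nonneg_mult[OF a S_nonneg] unfolding mat_nonneg_def by blast
  have bound: "(a (k + 2) ** S k) $ i $ j \<le> ((real (k + 2) *\<^sub>R a (k + 2)) *v ones) $ i" for k
  proof -
    have "(a (k + 2) ** S k) $ i $ j \<le> (a (k + 2) *v (S k *v ones)) $ i"
      using mat_nonneg_entry_le_row_sum[OF mat_nonneg_mult[OF a S_nonneg]]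
      by (simp add: matrix_vector_mul_assoc)
    also have "\<dots> \<le> (a (k + 2) *v (real (k + 2) *\<^sub>R ones)) $ i"
      using S_rows by (intro matrix_vector_mult_mono a) simp
    finally show ?thesis by (simp add: matrix_vector_mult_scaleR matrix_vector_mult_scaleR_left)
  qed
  define g where "g k = ((real (k + 2) *\<^sub>R a (k + 2)) *v ones) $ i" for k
  have "summable g"
    unfolding g_def using summable_vec_nth[OF bounded_linear.summable[OF
        bounded_linear_matrix_vector_mult_left summable_ignore_initial_segment[OF ka, of 2]]] .
  moreover have "norm ((a (k + 2) ** S k) $ i $ j) \<le> g k" for k
    unfolding g_def using nonneg[of k] bound[of k] by (simp only: real_norm_def abs_of_nonneg)
  ultimately have "summable (\<lambda>k. (a (k + 2) ** S k) $ i $ j)"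
    by (rule summable_comparison_test')
  then show "summable (\<lambda>k. (a (k + 2) ** (\<Sum>j\<le>k + 1. matpow G j)) $ i $ j)"
    unfolding S_def .
qed

lemma geometric_weight_series_identity:
  assumes a: "summable a" and G: "(\<lambda>k. a k ** matpow G k) sums G"
    and W: "summable (\<lambda>k. a (k + 2) ** (\<Sum>j\<le>k + 1. matpow G j))"
  shows "(\<Sum>k. a (k + 2) ** (\<Sum>j\<le>k + 1. matpow G j)) ** (mat 1 - G) = suminf a - a 1 - G + a 1 ** G"
proof -
  have G_summable: "summable (\<lambda>k. a k ** matpow G k)"
    using G by (rule sums_summable)
  have "a (k + 2) ** (\<Sum>j\<le>k + 1. matpow G j) ** (mat 1 - G) = a (k + 2) - a (k + 2) ** matpow G (k + 2)" for k
  proof -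
    have "a (k + 2) ** (\<Sum>j\<le>k + 1. matpow G j) ** (mat 1 - G)
        = a (k + 2) ** ((\<Sum>j\<le>k + 1. matpow G j) ** (mat 1 - G))"
      by (simp only: matrix_mul_assoc)
    also have "\<dots> = a (k + 2) ** (mat 1 - matpow G (k + 2))"
      using matpow_geometric_sum[of G "k + 1"] by (simp only: add_2_eq_Suc' Suc_eq_plus1)
    finally show ?thesis
      by (simp only: matrix_diff_ldistrib matrix_mul_rid)
  qed
  note termwise = this
  have "(\<Sum>k. a (k + 2) ** (\<Sum>j\<le>k + 1. matpow G j)) ** (mat 1 - G)
      = (\<Sum>k. a (k + 2) ** (\<Sum>j\<le>k + 1. matpow G j) ** (mat 1 - G))"
    by (rule bounded_linear.suminf[OF bounded_linear_matrix_mult_right W])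
  also have "\<dots> = (\<Sum>k. a (k + 2) - a (k + 2) ** matpow G (k + 2))"
    by (simp only: termwise)
  also have "\<dots> = (\<Sum>k. a (k + 2)) - (\<Sum>k. a (k + 2) ** matpow G (k + 2))"
    using summable_ignore_initial_segment[OF a] summable_ignore_initial_segment[OF G_summable]
    by (rule suminf_diff[symmetric])
  also have "(\<Sum>k. a (k + 2)) = suminf a - (a 0 + a 1)"
    using suminf_split_initial_segment[OF a, of 2] by (simp add: numeral_2_eq_2)
  also have "(\<Sum>k. a (k + 2) ** matpow G (k + 2)) = G - (a 0 + a 1 ** G)"
  proof -
    have "(\<Sum>k. a (k + 2) ** matpow G (k + 2)) + (\<Sum>k<2. a k ** matpow G k) = G"
      using trans[OF suminf_split_initial_segment[OF G_summable, of 2, symmetric] sums_unique[OF G, symmetric]] .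
    moreover have "(\<Sum>k<2. a k ** matpow G k) = a 0 + a 1 ** G"
      by (simp add: numeral_2_eq_2)
    ultimately show ?thesis
      unfolding eq_diff_eq by simp
  qed
  finally show ?thesis by (simp add: algebra_simps)
qed

lemma geometric_weight_series_fixed_vector:
  assumes ka: "summable (\<lambda>k. real k *\<^sub>R a k)"
    and W: "summable (\<lambda>k. a (k + 2) ** (\<Sum>j\<le>k + 1. matpow G j))"
    and \<zeta>: "G *v \<zeta> = \<zeta>"
  shows "(\<Sum>k. a (k + 2) ** (\<Sum>j\<le>k + 1. matpow G j)) *v \<zeta> = (\<Sum>k. real (k + 2) *\<^sub>R a (k + 2)) *v \<zeta>"
proof -
  have "(\<Sum>j\<le>k + 1. matpow G j) *v \<zeta> = real (k + 2) *\<^sub>R \<zeta>" for k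
    by (simp del: sum.atMost_Suc sum_constant
        add: sum_constant_scaleR matrix_vector_mult_sum_left matpow_fixed_vector[OF \<zeta>])
  then have "(a (k + 2) ** (\<Sum>j\<le>k + 1. matpow G j)) *v \<zeta> = (real (k + 2) *\<^sub>R a (k + 2)) *v \<zeta>" for k
    by (simp del: sum.atMost_Suc add: matrix_vector_mul_assoc[symmetric] matrix_vector_mult_scaleR_left
        matrix_vector_mult_scaleR)
  then show ?thesis
    using bounded_linear.suminf[OF bounded_linear_matrix_vector_mult_left W]
      bounded_linear.suminf[OF bounded_linear_matrix_vector_mult_left summable_ignore_initial_segment[OF ka, of 2]]
    by simp
qed

end

lemma sums_nonneg_single:
  fixes f :: "nat \<Rightarrow> real"
  assumes "\<And>k. 0 \<le> f k" "f sums f n" "k \<noteq> n"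
  shows "f k = 0"
proof -
  have "(\<lambda>k. f k - (if k = n then f n else 0)) sums (f n - f n)"
    by (intro sums_diff assms(2) sums_single)
  then have "(\<lambda>k. if k = n then 0 else f k) sums 0"
    by (simp add: if_distrib cong: if_cong)
  then show ?thesis
    using assms(1,3) sums_unique[of _ 0] suminf_eq_zero_iff[OF sums_summable]
    by (smt (verit, best))
qed

locale mg1_type =
  fixes A :: "int \<Rightarrow> real^'n^'n" and v :: "real^'n" and G :: "real^'n^'n"
  assumes A_nonneg: "\<And>i. i \<ge> -1 \<Longrightarrow> mat_nonneg (A i)"
    and A_summable: "summable (\<lambda>k. A (int k - 1))"
    and A_irred: "irreducible_mat (\<Sum>k. A (int k - 1))"
    and A_stoch: "row_stochastic (\<Sum>k. A (int k - 1))"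
    and iA_summable: "summable (\<lambda>k. real_of_int (int k - 1) *\<^sub>R A (int k - 1))"
    and v_pos: "\<And>i. v $ i > 0"
    and v_left: "v v* (\<Sum>k. A (int k - 1)) = v"
    and eta_neg: "v \<bullet> ((\<Sum>k. real_of_int (int k - 1) *\<^sub>R A (int k - 1)) *v ones) < 0"
    and G_nonneg: "mat_nonneg G"
    and G_solves: "(\<lambda>k. A (int k - 1) ** matpow G k) sums G"
    and G_minimal: "\<And>X. mat_nonneg X \<Longrightarrow> (\<lambda>k. A (int k - 1) ** matpow X k) sums X \<Longrightarrow> mat_le G X"
begin

abbreviation Asum :: "real^'n^'n" where
  "Asum \<equiv> \<Sum>k. A (int k - 1)"

abbreviation W :: "real^'n^'n" where
  "W \<equiv> \<Sum>k. A (int k + 1) ** (\<Sum>j\<le>k + 1. matpow G j)"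

abbreviation R :: "real^'n^'n" where
  "R \<equiv> matrix_inv (mat 1 - A 0)"

lemma level_nonneg: "mat_nonneg (A (int k - 1))"
  by (rule A_nonneg) simp

lemma level_shift: "A (int (k + 2) - 1) = A (int k + 1)" "A (int 1 - 1) = A 0"
  by (simp_all add: algebra_simps)

lemma A_sums: "(\<lambda>k. A (int k - 1)) sums Asum"
  using A_summable by (rule summable_sums)

lemma kA_summable: "summable (\<lambda>k. real k *\<^sub>R A (int k - 1))"
proof -
  have "summable (\<lambda>k. real_of_int (int k - 1) *\<^sub>R A (int k - 1) + A (int k - 1))"
    by (rule summable_add[OF iA_summable A_summable])
  then show ?thesis by (simp add: algebra_simps)
qed

lemma level_le_Asum: "mat_le (A (int k - 1)) Asum"
  unfolding mat_le_def
proof (intro allI)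
  fix i j
  have "(\<Sum>l\<in>{k}. A (int l - 1) $ i $ j) \<le> (\<Sum>l. A (int l - 1) $ i $ j)"
    using level_nonneg unfolding mat_nonneg_def
    by (intro sum_le_suminf summable_matrix_nth A_summable) auto
  then show "A (int k - 1) $ i $ j \<le> Asum $ i $ j"
    by (simp add: suminf_matrix_nth[OF A_summable])
qed

lemma Asum_substochastic: "substochastic Asum"
  using A_stoch unfolding row_stochastic_def substochastic_def by simp

lemma G_substochastic: "substochastic G"
  by (rule minimal_solution_substochastic[OF level_nonneg A_summable Asum_substochastic G_nonneg])
     (use G_minimal in blast)

lemma A0_neq_Asum: "A 0 \<noteq> Asum"
proof
  assume A0: "A 0 = Asum"
  have "A (int k - 1) = 0" if "k \<noteq> 1" for k
  proof -
    have "A (int k - 1) $ i $ j = 0" for i j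
      using level_nonneg sums_vec_nth[OF sums_vec_nth[OF A_sums]] A0 that
      by (intro sums_nonneg_single[where n = 1]) (auto simp: mat_nonneg_def)
    then show ?thesis by (simp add: vec_eq_iff)
  qed
  then have "(\<lambda>k. real_of_int (int k - 1) *\<^sub>R A (int k - 1)) = (\<lambda>k. 0)"
    by (metis (mono_tags) diff_self of_int_0 of_nat_1 scaleR_eq_0_iff)
  then show False using eta_neg by simp
qed

lemma R_inverse: "(mat 1 - A 0) ** R = mat 1" "R ** (mat 1 - A 0) = mat 1" "mat_nonneg R"
proof -
  have A0: "mat_nonneg (A 0)" "mat_le (A 0) Asum"
    using level_nonneg[of 1] level_le_Asum[of 1] by simp_all
  note resolvent = irreducible_stochastic_resolvent[OF A_stoch A_irred A0 A0_neq_Asum]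
  show "(mat 1 - A 0) ** R = mat 1" "R ** (mat 1 - A 0) = mat 1"
    using matrix_inv_invertible[OF resolvent(1)] by simp_all
  show "mat_nonneg R" by (rule resolvent(2))
qed

lemma W_summable: "summable (\<lambda>k. A (int k + 1) ** (\<Sum>j\<le>k + 1. matpow G j))"
  using geometric_weight_series_summable[OF level_nonneg kA_summable G_substochastic]
  unfolding level_shift .

lemma W_terms_nonneg: "mat_nonneg (A (int k + 1) ** (\<Sum>j\<le>k + 1. matpow G j))"
  using G_nonneg by (intro mat_nonneg_mult A_nonneg mat_nonneg_sum mat_nonneg_matpow) auto

lemma W_nonneg: "mat_nonneg W"
  unfolding mat_nonneg_def suminf_matrix_nth[OF W_summable]
  using W_terms_nonneg unfolding mat_nonneg_def
  by (intro allI suminf_nonneg summable_matrix_nth[OF W_summable]) blast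

lemma W_ge_first_term: "mat_le (A 1 ** (mat 1 + G)) W"
  unfolding mat_le_def
proof (intro allI)
  fix i j
  have "(\<Sum>k\<in>{0}. (A (int k + 1) ** (\<Sum>j\<le>k + 1. matpow G j)) $ i $ j) \<le> W $ i $ j"
    unfolding suminf_matrix_nth[OF W_summable]
    using W_terms_nonneg unfolding mat_nonneg_def
    by (intro sum_le_suminf summable_matrix_nth W_summable) auto
  then show "(A 1 ** (mat 1 + G)) $ i $ j \<le> W $ i $ j"
    by (simp add: add.commute)
qed

lemma W_identity: "(mat 1 - A 0 - W) ** (mat 1 - G) = mat 1 - Asum"
proof -
  have W: "W ** (mat 1 - G) = Asum - A 0 - G + A 0 ** G"
    using geometric_weight_series_identity[OF A_summable G_solves W_summable[folded level_shift(1)]]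
    unfolding level_shift .
  have "(mat 1 - A 0 - W) ** (mat 1 - G) = (mat 1 - G) - A 0 ** (mat 1 - G) - W ** (mat 1 - G)"
    by (simp only: matrix_diff_rdistrib matrix_mul_lid)
  also have "\<dots> = (mat 1 - G) - (A 0 - A 0 ** G) - (Asum - A 0 - G + A 0 ** G)"
    unfolding W by (simp only: matrix_diff_ldistrib matrix_mul_rid)
  finally show ?thesis
    by (simp add: algebra_simps)
qed

lemma drift_identity:
  assumes "G *v ones = ones"
  shows "(mat 1 - A 0 - W) *v ones = - ((\<Sum>k. real_of_int (int k - 1) *\<^sub>R A (int k - 1)) *v ones)"
proof -
  have W_ones: "W *v ones = (\<Sum>k. real (k + 2) *\<^sub>R A (int (k + 2) - 1)) *v ones"
    using geometric_weight_series_fixed_vector[OF kA_summable W_summable[folded level_shift(1)] assms]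
    unfolding level_shift .
  have split: "Asum - A 0 - (\<Sum>k. real (k + 2) *\<^sub>R A (int (k + 2) - 1))
      = - (\<Sum>k. real_of_int (int k - 1) *\<^sub>R A (int k - 1))"
    using mean_drift_split[OF A_summable kA_summable] unfolding level_shift by simp
  have Asum_ones: "Asum *v ones = ones"
    using A_stoch unfolding row_stochastic_def by simp
  have "(mat 1 - A 0 - W) *v ones
      = (Asum - A 0 - (\<Sum>k. real (k + 2) *\<^sub>R A (int (k + 2) - 1))) *v ones"
    by (simp only: matrix_vector_mult_diff_rdistrib matrix_vector_mul_lid W_ones Asum_ones)
  also have "\<dots> = - ((\<Sum>k. real_of_int (int k - 1) *\<^sub>R A (int k - 1)) *v ones)"
    unfolding split by (rule matrix_vector_mult_uminus_left)
  finally show ?thesis .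
qed

lemma drift_row_vector_nonneg:
  assumes z: "\<And>i. 0 \<le> z $ i"
  shows "0 \<le> (v v* (mat 1 - A 0 - W)) \<bullet> z"
proof -
  define r where "r = v v* (mat 1 - A 0 - W)"
  have "r v* (mat 1 - G) = 0"
    unfolding r_def vector_matrix_mul_assoc W_identity
    by (simp add: vector_matrix_mult_diff_rdistrib v_left)
  then have "r v* G = r"
    by (simp add: vector_matrix_mult_diff_rdistrib)
  then obtain \<zeta> where \<zeta>: "G *v \<zeta> = \<zeta>" "r \<bullet> \<zeta> = r \<bullet> z" "\<And>i. 0 \<le> \<zeta> $ i"
    using left_invariant_fixed_vector[OF G_substochastic _ z] by blast
  have "Asum *v \<zeta> = \<zeta>"
    by (rule power_series_fixed_vector[OF A_summable G_solves \<zeta>(1)])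
  then obtain c where c: "\<zeta> = c *\<^sub>R ones"
    using irreducible_stochastic_fixed_vector[OF A_stoch A_irred] by blast
  fix i0 :: 'n
  have "0 \<le> c" using \<zeta>(3)[of i0] c by simp
  have "0 \<le> r \<bullet> \<zeta>"
  proof (cases "c = 0")
    case False
    then have "G *v ones = ones"
      using \<zeta>(1) unfolding c by (simp add: matrix_vector_mult_scaleR)
    then have "(mat 1 - A 0 - W) *v \<zeta> = c *\<^sub>R - ((\<Sum>k. real_of_int (int k - 1) *\<^sub>R A (int k - 1)) *v ones)"
      unfolding c by (simp only: matrix_vector_mult_scaleR drift_identity)
    then have "r \<bullet> \<zeta> = - c * (v \<bullet> ((\<Sum>k. real_of_int (int k - 1) *\<^sub>R A (int k - 1)) *v ones))"
      unfolding r_def dot_lmul_matrix by simp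
    then show ?thesis
      using eta_neg \<open>0 \<le> c\<close> by (simp add: mult_nonneg_nonpos less_imp_le)
  qed (simp add: c)
  with \<zeta>(2) show ?thesis unfolding r_def by simp
qed

lemma left_defect_inner_pos:
  assumes z: "\<And>i. 0 < z $ i"
  shows "0 < (v v* (mat 1 - A 0)) \<bullet> z"
proof -
  define q where "q = v v* (mat 1 - A 0)"
  have q: "q = v v* (Asum - A 0)"
    unfolding q_def by (simp add: vector_matrix_mult_diff_rdistrib v_left)
  have terms_nonneg: "0 \<le> v $ i * (Asum - A 0) $ i $ j" for i j
    using level_le_Asum[of 1] v_pos[of i] unfolding mat_le_def by simp
  then have q_nonneg: "0 \<le> q $ j" for j
    unfolding q vector_matrix_mult_def by (simp add: sum_nonneg)
  have "q \<noteq> 0"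
  proof
    assume "q = 0"
    have "(Asum - A 0) $ i $ j = 0" for i j
    proof -
      have "(\<Sum>i\<in>UNIV. v $ i * (Asum - A 0) $ i $ j) = 0"
        using \<open>q = 0\<close> unfolding q vector_matrix_mult_def by (simp add: vec_eq_iff)
      moreover have "(\<Sum>i\<in>UNIV. v $ i * (Asum - A 0) $ i $ j) = 0
          \<longleftrightarrow> (\<forall>i\<in>UNIV. v $ i * (Asum - A 0) $ i $ j = 0)"
        by (rule sum_nonneg_eq_0_iff) (simp, rule terms_nonneg)
      ultimately have "v $ i * (Asum - A 0) $ i $ j = 0"
        by blast
      then show ?thesis
        using v_pos[of i] by simp
    qed
    then show False
      using A0_neq_Asum by (simp add: vec_eq_iff)
  qed
  then obtain j where "q $ j \<noteq> 0"
    by (metis vec_eq_iff zero_index)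
  then have "0 < q $ j * z $ j"
    using q_nonneg[of j] z[of j] by simp
  also have "q $ j * z $ j \<le> q \<bullet> z"
    unfolding inner_vec_def inner_real_def
    using q_nonneg z by (intro member_le_sum) (auto simp: less_imp_le)
  finally show ?thesis
    unfolding q_def .
qed

lemma RW_eigenvalue_le_one:
  assumes z: "\<And>i. 0 < z $ i" and eig: "(R ** W) *v z = \<rho> *\<^sub>R z"
  shows "\<rho> \<le> 1"
proof -
  define q where "q = v v* (mat 1 - A 0)"
  have "(mat 1 - A 0) ** (mat 1 - R ** W) = mat 1 - A 0 - W"
    by (simp only: matrix_diff_ldistrib matrix_mul_rid matrix_mul_assoc R_inverse(1) matrix_mul_lid)
  then have "(v v* (mat 1 - A 0 - W)) \<bullet> z = (q v* (mat 1 - R ** W)) \<bullet> z"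
    unfolding q_def vector_matrix_mul_assoc by simp
  also have "\<dots> = q \<bullet> ((mat 1 - R ** W) *v z)"
    by (rule dot_lmul_matrix)
  also have "(mat 1 - R ** W) *v z = (1 - \<rho>) *\<^sub>R z"
    by (simp only: matrix_vector_mult_diff_rdistrib matrix_vector_mul_lid eig scaleR_diff_left scaleR_one)
  also have "q \<bullet> ((1 - \<rho>) *\<^sub>R z) = (1 - \<rho>) * (q \<bullet> z)"
    by (rule inner_scaleR_right)
  finally have "0 \<le> (1 - \<rho>) * (q \<bullet> z)"
    using drift_row_vector_nonneg[of z] z by (simp add: less_imp_le)
  with left_defect_inner_pos[OF z] show ?thesis
    unfolding q_def by (simp add: zero_le_mult_iff)
qed

lemma perturbation_nonneg:
  assumes "0 \<le> \<omega>" "\<omega> \<le> \<omega>h"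
    and \<omega>h: "mat_le (\<omega>h *\<^sub>R (A 1 ** (mat 1 + G) ** R ** (mat 1 - A 0 - W))) W"
  shows "mat_nonneg (R ** W - \<omega> *\<^sub>R (R ** A 1 ** (mat 1 + G) ** (mat 1 - R ** W)))"
proof -
  define X where "X = A 1 ** (mat 1 + G) ** R ** (mat 1 - A 0 - W)"
  have "R ** (mat 1 - A 0 - W) = R ** (mat 1 - A 0) - R ** W"
    by (rule matrix_diff_ldistrib)
  then have "mat 1 - R ** W = R ** (mat 1 - A 0 - W)"
    by (simp only: R_inverse(2))
  then have "R ** A 1 ** (mat 1 + G) ** (mat 1 - R ** W) = R ** X"
    unfolding X_def by (simp only: matrix_mul_assoc)
  then have "R ** W - \<omega> *\<^sub>R (R ** A 1 ** (mat 1 + G) ** (mat 1 - R ** W)) = R ** (W - \<omega> *\<^sub>R X)"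
    by (simp add: matrix_diff_ldistrib matrix_scalar_ac scalar_matrix_assoc)
  moreover have "mat_nonneg (W - \<omega> *\<^sub>R X)"
    unfolding mat_nonneg_def
  proof (intro allI)
    fix i j
    have "\<omega> * X $ i $ j \<le> max 0 (\<omega>h * X $ i $ j)"
      using assms(1,2) by (cases "X $ i $ j \<le> 0") (auto simp: mult_nonneg_nonpos mult_right_mono)
    also have "\<dots> \<le> W $ i $ j"
      using \<omega>h W_nonneg unfolding X_def mat_le_def mat_nonneg_def by simp
    finally show "0 \<le> (W - \<omega> *\<^sub>R X) $ i $ j" by simp
  qed
  ultimately show ?thesis
    using R_inverse(3) by (simp add: mat_nonneg_mult)
qed

lemma perturbation_direction_bounds:
  assumes z: "\<And>i. 0 \<le> z $ i" and eig: "(R ** W) *v z = \<rho> *\<^sub>R z"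
  shows "0 \<le> (R ** A 1 ** (mat 1 + G) *v z) $ i" and "(R ** A 1 ** (mat 1 + G) *v z) $ i \<le> \<rho> * z $ i"
proof -
  have B: "mat_nonneg (A 1 ** (mat 1 + G))"
    using G_nonneg by (intro mat_nonneg_mult mat_nonneg_add A_nonneg mat_nonneg_one) auto
  show "0 \<le> (R ** A 1 ** (mat 1 + G) *v z) $ i"
    using B R_inverse(3) z
    by (simp add: matrix_mul_assoc[symmetric] mat_nonneg_mult matrix_vector_mult_nonneg)
  have "mat_nonneg (R ** (W - A 1 ** (mat 1 + G)))"
    using R_inverse(3) W_ge_first_term unfolding mat_le_def
    by (intro mat_nonneg_mult) (auto simp: mat_nonneg_def)
  then have "0 \<le> ((R ** (W - A 1 ** (mat 1 + G))) *v z) $ i"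
    using z by (rule matrix_vector_mult_nonneg)
  then show "(R ** A 1 ** (mat 1 + G) *v z) $ i \<le> \<rho> * z $ i"
    using eig by (simp add: matrix_diff_ldistrib matrix_vector_mult_diff_rdistrib matrix_mul_assoc)
qed

end

theorem proposition5:
  fixes A :: "int \<Rightarrow> real^'n^'n"
    and v z :: "real^'n"
    and G :: "real^'n^'n"
    and \<omega> \<omega>h :: real
  defines "Asum \<equiv> (\<Sum>k. A (int k - 1))"
  defines "w \<equiv> (\<Sum>k. (real_of_int (int k - 1)) *\<^sub>R A (int k - 1)) *v ones"
  defines "W \<equiv> (\<Sum>k. A (int k + 1) ** (\<Sum>j\<le>k + 1. matpow G j))"
  defines "R \<equiv> matrix_inv (mat 1 - A 0)"
  defines "P \<equiv> (\<lambda>\<omega>::real. R ** W - \<omega> *\<^sub>R (R ** A 1 ** (mat 1 + G) ** (mat 1 - R ** W)))"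
  defines "u \<equiv> R ** A 1 ** (mat 1 + G) *v z"
  defines "\<sigma>min \<equiv> Min {u $ i / z $ i | i. True}"
  defines "\<sigma>max \<equiv> Max {u $ i / z $ i | i. True}"
  assumes A_nonneg: "\<And>i. i \<ge> -1 \<Longrightarrow> mat_nonneg (A i)"
    and A_summable: "summable (\<lambda>k. A (int k - 1))"
    and A_irred: "irreducible_mat Asum"
    and A_stoch: "row_stochastic Asum"
    and iA_summable: "summable (\<lambda>k. (real_of_int (int k - 1)) *\<^sub>R A (int k - 1))"
    and v_pos: "\<And>i. v $ i > 0"
    and v_left: "v v* Asum = v"
    and v_norm: "v \<bullet> ones = 1"
    and eta_neg: "v \<bullet> w < 0"
    and G_nonneg: "mat_nonneg G"
    and G_solves: "(\<lambda>k. A (int k - 1) ** matpow G k) sums G"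
    and G_minimal: "\<And>X. mat_nonneg X \<Longrightarrow> (\<lambda>k. A (int k - 1) ** matpow X k) sums X
                        \<Longrightarrow> mat_le G X"
    and \<omega>h_ge: "\<omega>h \<ge> 1"
    and \<omega>h_cond: "mat_le (\<omega>h *\<^sub>R (A 1 ** (mat 1 + G) ** R ** (mat 1 - A 0 - W))) W"
    and \<omega>_range: "0 \<le> \<omega>" "\<omega> \<le> \<omega>h"
    and z_pos: "\<And>i. z $ i > 0"
    and z_eig: "P 0 *v z = spectral_radius (P 0) *\<^sub>R z"
  shows "spectral_radius (P 0) - \<omega> * (1 - spectral_radius (P 0)) * \<sigma>max \<le> spectral_radius (P \<omega>)
       \<and> spectral_radius (P \<omega>) \<le> spectral_radius (P 0) - \<omega> * (1 - spectral_radius (P 0)) * \<sigma>min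
       \<and> 0 \<le> \<sigma>min \<and> \<sigma>min \<le> spectral_radius (P 0)
       \<and> 0 \<le> \<sigma>max \<and> \<sigma>max \<le> spectral_radius (P 0)"
proof -
  have mg1: "mg1_type A v G"
    using A_nonneg A_summable A_irred A_stoch iA_summable v_pos v_left eta_neg G_nonneg G_solves G_minimal
    unfolding Asum_def w_def by unfold_locales
  define \<rho> where "\<rho> = spectral_radius (P 0)"
  have RW: "(R ** W) *v z = \<rho> *\<^sub>R z"
    using z_eig unfolding \<rho>_def P_def by simp
  have "\<rho> \<le> 1"
    using mg1_type.RW_eigenvalue_le_one[OF mg1 z_pos, folded R_def W_def] RW .
  have u: "0 \<le> u $ i" "u $ i \<le> \<rho> * z $ i" for i
    using mg1_type.perturbation_direction_bounds[OF mg1 _ RW[unfolded R_def W_def], folded R_def W_def] z_pos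
    unfolding u_def by (simp_all add: less_imp_le)
  note \<sigma> = ratio_extrema_bounds[OF z_pos u, folded \<sigma>min_def \<sigma>max_def]
  have "mat_nonneg (P \<omega>)"
    using mg1_type.perturbation_nonneg[OF mg1 \<omega>_range, folded R_def W_def] \<omega>h_cond
    unfolding P_def by blast
  moreover have "P \<omega> *v z = \<rho> *\<^sub>R z - (\<omega> * (1 - \<rho>)) *\<^sub>R u"
    unfolding P_def u_def by (rule perturbed_eigenvector_identity[OF RW])
  moreover have "0 \<le> \<omega> * (1 - \<rho>)"
    using \<omega>_range \<open>\<rho> \<le> 1\<close> by simp
  ultimately show ?thesis
    using spectral_radius_perturbed_eigenvector[OF _ z_pos _ _ \<sigma>(5,6)] \<sigma>(1-4) unfolding \<rho>_def by blast
qed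

end
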